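(* Let $R$ be an associative ring with identity which is left quasi-morphic. Then $R$ is left uniquely generated if and only if $R$ has stable range one.
   Context: For $a \in R$, $\operatorname{ann}_l(a) = \{r \in R : ra = 0\}$. $R$ is left quasi-morphic if the set of principal left ideals $\{Ra : a \in R\}$ coincides with the set of left annihilators $\{\operatorname{ann}_l(b) : b \in R\}$. $R$ is left uniquely generated if for all $a, b \in R$ with $Ra = Rb$ there exists a unit $u$ of $R$ with $a = ub$. $R$ has stable range one if whenever $a, b, x \in R$ satisfy $ax + b = 1$, there exists $y \in R$ such that $a + by$ is a unit of $R$. *)

theory Defs
  imports Main
begin

definition unit_of :: "'a::ring_1 \<Rightarrow> bool" where
  "unit_of u \<longleftrightarrow> (\<exists>v. u * v = 1 \<and> v * u = 1)"

definition principal_left :: "'a::ring_1 \<Rightarrow> 'a set" where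
  "principal_left a = {r * a | r. True}"

definition ann_l :: "'a::ring_1 \<Rightarrow> 'a set" where
  "ann_l a = {r. r * a = 0}"

definition left_quasi_morphic :: "'a::ring_1 itself \<Rightarrow> bool" where
  "left_quasi_morphic _ \<longleftrightarrow>
     range (principal_left :: 'a \<Rightarrow> 'a set) = range (ann_l :: 'a \<Rightarrow> 'a set)"

definition left_uniquely_generated :: "'a::ring_1 itself \<Rightarrow> bool" where
  "left_uniquely_generated _ \<longleftrightarrow>
     (\<forall>a b :: 'a. principal_left a = principal_left b \<longrightarrow> (\<exists>u. unit_of u \<and> a = u * b))"

definition stable_range_one :: "'a::ring_1 itself \<Rightarrow> bool" where
  "stable_range_one _ \<longleftrightarrow>
     (\<forall>a b x :: 'a. a * x + b = 1 \<longrightarrow> (\<exists>y. unit_of (a + b * y)))"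

end

theory Submission
  imports Defs
begin

text \<open>Stable range one says that \<open>a + (1 - a x) y\<close> is a unit for some \<open>y\<close>; by the
  Jacobson-type swap below this is equivalent to \<open>a + y (1 - x a)\<close> being a unit for some
  \<open>y\<close>, which is the form that talks about the principal left ideal \<open>R(1 - x a)\<close>.
  If \<open>R\<close> is left uniquely generated and \<open>R(1 - x a) = ann\<^sub>l(c)\<close>, then \<open>x a c = c\<close>, so
  \<open>R(a c) = R c\<close> and \<open>a c = u c\<close> with \<open>u\<close> a unit; hence \<open>a - u \<in> ann\<^sub>l(c) = R(1 - x a)\<close>.
  Conversely, if \<open>a = s b\<close> and \<open>b = t a\<close>, stable range one applied to \<open>s t + (1 - s t) = 1\<close>
  gives a unit \<open>u = s + y (1 - t s)\<close>, and \<open>u b = a\<close> because \<open>(1 - t s) b = 0\<close>.\<close>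

text \<open>Both swaps rest on the intertwining identities \<open>q (1 - x y) = (1 - y x) p\<close> and
  \<open>(1 - a x) q = p (1 - x a)\<close>, which turn an inverse of one side into an inverse of the other.\<close>

lemma unit_of_swap_left_right:
  fixes a x y :: "'a::ring_1"
  assumes "unit_of (a + (1 - a*x)*y)"
  shows "unit_of (a + y*(1 - x*a))"
proof -
  define p where "p = a + (1 - a*x)*y"
  define q where "q = a + y*(1 - x*a)"
  obtain v where v: "p*v = 1" "v*p = 1" using assms unfolding unit_of_def p_def by blast
  have q_p: "q*(1 - x*y) = (1 - y*x)*p" "(1 - a*x)*q = p*(1 - x*a)"
    unfolding p_def q_def by (simp_all add: algebra_simps)
  define w where "w = x + (1 - x*y)*v*(1 - a*x)"
  have "q*w = q*x + (q*(1 - x*y))*v*(1 - a*x)" unfolding w_def by (simp add: algebra_simps)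
  also have "\<dots> = q*x + (1 - y*x)*(p*v)*(1 - a*x)" by (simp add: q_p mult.assoc)
  also have "\<dots> = 1" using v(1) unfolding q_def by (simp add: algebra_simps)
  finally have right_inverse: "q*w = 1" .
  have "w*q = x*q + (1 - x*y)*v*((1 - a*x)*q)" unfolding w_def by (simp add: algebra_simps)
  also have "\<dots> = x*q + (1 - x*y)*(v*p)*(1 - x*a)" by (simp add: q_p mult.assoc)
  also have "\<dots> = 1" using v(2) unfolding q_def by (simp add: algebra_simps)
  finally show ?thesis using right_inverse unfolding unit_of_def q_def by blast
qed

lemma unit_of_swap_right_left:
  fixes a x y :: "'a::ring_1"
  assumes "unit_of (a + y*(1 - x*a))"
  shows "unit_of (a + (1 - a*x)*y)"
proof -
  define p where "p = a + (1 - a*x)*y"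
  define q where "q = a + y*(1 - x*a)"
  obtain v where v: "q*v = 1" "v*q = 1" using assms unfolding unit_of_def q_def by blast
  have p_q: "p*(1 - x*a) = (1 - a*x)*q" "(1 - y*x)*p = q*(1 - x*y)"
    unfolding p_def q_def by (simp_all add: algebra_simps)
  define w where "w = x + (1 - x*a)*v*(1 - y*x)"
  have "p*w = p*x + (p*(1 - x*a))*v*(1 - y*x)" unfolding w_def by (simp add: algebra_simps)
  also have "\<dots> = p*x + (1 - a*x)*(q*v)*(1 - y*x)" by (simp add: p_q mult.assoc)
  also have "\<dots> = 1" using v(1) unfolding p_def by (simp add: algebra_simps)
  finally have right_inverse: "p*w = 1" .
  have "w*p = x*p + (1 - x*a)*v*((1 - y*x)*p)" unfolding w_def by (simp add: algebra_simps)
  also have "\<dots> = x*p + (1 - x*a)*(v*q)*(1 - x*y)" by (simp add: p_q mult.assoc)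
  also have "\<dots> = 1" using v(2) unfolding p_def by (simp add: algebra_simps)
  finally show ?thesis using right_inverse unfolding unit_of_def p_def by blast
qed

lemma unit_of_swap_iff:
  fixes a x y :: "'a::ring_1"
  shows "unit_of (a + (1 - a*x)*y) \<longleftrightarrow> unit_of (a + y*(1 - x*a))"
  using unit_of_swap_left_right unit_of_swap_right_left by blast

lemma stable_range_one_iff_left:
  "stable_range_one TYPE('a::ring_1) \<longleftrightarrow> (\<forall>a x :: 'a. \<exists>y. unit_of (a + y*(1 - x*a)))"
proof -
  have "stable_range_one TYPE('a) \<longleftrightarrow> (\<forall>a x :: 'a. \<exists>y. unit_of (a + (1 - a*x)*y))"
    unfolding stable_range_one_def
    by (metis add_diff_cancel_left' diff_add_cancel)
  then show ?thesis by (simp add: unit_of_swap_iff)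
qed

lemma mem_principal_left_self: "a \<in> principal_left a"
  unfolding principal_left_def by (metis (mono_tags) mem_Collect_eq mult_1_left)

lemma principal_left_eq_iff:
  fixes a b :: "'a::ring_1"
  shows "principal_left a = principal_left b \<longleftrightarrow> (\<exists>s t. a = s*b \<and> b = t*a)"
proof
  assume eq: "principal_left a = principal_left b"
  have "a \<in> principal_left b" "b \<in> principal_left a"
    using mem_principal_left_self eq by blast+
  then show "\<exists>s t. a = s*b \<and> b = t*a" unfolding principal_left_def by blast
next
  assume "\<exists>s t. a = s*b \<and> b = t*a"
  then obtain s t where "a = s*b" "b = t*a" by blast
  then show "principal_left a = principal_left b"
    unfolding principal_left_def by (metis mult.assoc)
qed

lemma left_quasi_morphicE:
  fixes a :: "'a::ring_1"
  assumes "left_quasi_morphic TYPE('a)"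
  obtains c where "principal_left a = ann_l c"
  using assms unfolding left_quasi_morphic_def by (metis rangeI imageE)

lemma stable_range_one_imp_left_uniquely_generated:
  assumes "stable_range_one TYPE('a::ring_1)"
  shows "left_uniquely_generated TYPE('a)"
  unfolding left_uniquely_generated_def
proof (intro allI impI)
  fix a b :: 'a
  assume "principal_left a = principal_left b"
  then obtain s t where s: "a = s*b" and t: "b = t*a" by (auto simp: principal_left_eq_iff)
  obtain y where unit: "unit_of (s + y*(1 - t*s))"
    using assms by (auto simp: stable_range_one_iff_left)
  have "(1 - t*s)*b = 0" using s t by (simp add: algebra_simps mult.assoc)
  then have "(s + y*(1 - t*s)) * b = a" using s by (simp add: algebra_simps mult.assoc)
  then show "\<exists>u. unit_of u \<and> a = u * b" using unit by metis
qed

lemma left_uniquely_generated_imp_stable_range_one: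
  assumes qm: "left_quasi_morphic TYPE('a::ring_1)"
    and lug: "left_uniquely_generated TYPE('a)"
  shows "stable_range_one TYPE('a)"
  unfolding stable_range_one_iff_left
proof (intro allI)
  fix a x :: 'a
  obtain c where c: "principal_left (1 - x*a) = ann_l c" using qm by (rule left_quasi_morphicE)
  have "1 - x*a \<in> ann_l c" unfolding c[symmetric] by (rule mem_principal_left_self)
  then have "x*(a*c) = c" unfolding ann_l_def by (simp add: algebra_simps)
  then have "principal_left (a*c) = principal_left c"
    unfolding principal_left_eq_iff by metis
  then obtain u where u: "unit_of u" "a*c = u*c"
    using lug unfolding left_uniquely_generated_def by blast
  then have "a - u \<in> ann_l c" unfolding ann_l_def by (simp add: algebra_simps)
  then obtain r where "a - u = r*(1 - x*a)" unfolding c[symmetric] principal_left_def by blast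
  then have "u = a + (-r)*(1 - x*a)" by (simp add: algebra_simps)
  then show "\<exists>y. unit_of (a + y*(1 - x*a))" using u(1) by metis
qed

theorem theorem5:
  assumes "left_quasi_morphic TYPE('a::ring_1)"
  shows "left_uniquely_generated TYPE('a) \<longleftrightarrow> stable_range_one TYPE('a)"
  using assms left_uniquely_generated_imp_stable_range_one
    stable_range_one_imp_left_uniquely_generated by blast

end
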